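(* Let $H$ be a complex Hilbert space and let $\Delta:K(H)\to K(H)$ be a weak-2-local $^*$-derivation. Then $\Delta$ is a quasi-linear operator on $K(H)$.
   Context: $K(H)$ is the C$^*$-algebra of compact operators on $H$. A $^*$-derivation on a C$^*$-algebra $A$ is a linear map $D:A\to A$ with $D(ab)=D(a)b+aD(b)$ and $D(a^* )=D(a)^*$. A (not necessarily linear) map $\Delta:A\to A$ is a weak-2-local $^*$-derivation if for every $a,b\in A$ and every $\phi\in A^*$ there exists a $^*$-derivation $D_{a,b,\phi}$ with $\phi\Delta(a)=\phi D_{a,b,\phi}(a)$ and $\phi\Delta(b)=\phi D_{a,b,\phi}(b)$. For a self-adjoint $x\in A$, $A_x$ is the C$^*$-subalgebra generated by $x$. A map $\mu:A\to X$ ($X$ a Banach space) is a quasi-linear operator if (a) $\mu|_{A_x}$ is linear for each self-adjoint $x\in A$, and (b) $\mu(a+ib)=\mu(a)+i\mu(b)$ whenever $a,b$ are self-adjoint elements of $A$. *)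

theory Defs
  imports "HOL-Analysis.Analysis"
begin

class complex_vector = real_vector +
  fixes scaleC :: "complex \<Rightarrow> 'a \<Rightarrow> 'a" (infixr "*\<^sub>C" 75)
  assumes scaleC_add_right: "a *\<^sub>C (x + y) = a *\<^sub>C x + a *\<^sub>C y"
    and scaleC_add_left: "(a + b) *\<^sub>C x = a *\<^sub>C x + b *\<^sub>C x"
    and scaleC_scaleC: "a *\<^sub>C (b *\<^sub>C x) = (a * b) *\<^sub>C x"
    and scaleC_one: "1 *\<^sub>C x = x"
    and scaleR_scaleC: "r *\<^sub>R x = complex_of_real r *\<^sub>C x"

class complex_normed_vector = complex_vector + real_normed_vector +
  assumes norm_scaleC: "norm (a *\<^sub>C x) = cmod a * norm x"

class complex_inner = complex_normed_vector +
  fixes cinner :: "'a \<Rightarrow> 'a \<Rightarrow> complex"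
  assumes cinner_commute: "cinner x y = cnj (cinner y x)"
    and cinner_add_left: "cinner (x + y) z = cinner x z + cinner y z"
    and cinner_scaleC_left: "cinner (a *\<^sub>C x) y = cnj a * cinner x y"
    and cinner_ge_zero: "0 \<le> Re (cinner x x)"
    and cinner_eq_zero_iff: "cinner x x = 0 \<longleftrightarrow> x = 0"
    and norm_eq_sqrt_cinner: "norm x = sqrt (Re (cinner x x))"

class chilbert_space = complex_inner + complete_space

definition clinear_map :: "('a::complex_vector \<Rightarrow> 'b::complex_vector) \<Rightarrow> bool" where
  "clinear_map T \<longleftrightarrow> (\<forall>x y. T (x + y) = T x + T y) \<and> (\<forall>c x. T (c *\<^sub>C x) = c *\<^sub>C T x)"

definition compact_op :: "('a::complex_normed_vector \<Rightarrow> 'a) \<Rightarrow> bool" where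
  "compact_op T \<longleftrightarrow> clinear_map T \<and> compact (closure (T ` cball 0 1))"

definition Kop :: "('a::complex_normed_vector \<Rightarrow> 'a) set" where
  "Kop = {T. compact_op T}"

text \<open>Hilbert adjoint (exists and is unique for bounded operators, by Riesz).\<close>
definition adj :: "('a::complex_inner \<Rightarrow> 'a) \<Rightarrow> ('a \<Rightarrow> 'a)" where
  "adj T = (\<lambda>y. THE z. \<forall>x. cinner (T x) y = cinner x z)"

definition opadd :: "('a::complex_vector \<Rightarrow> 'a) \<Rightarrow> ('a \<Rightarrow> 'a) \<Rightarrow> ('a \<Rightarrow> 'a)" where
  "opadd S T = (\<lambda>v. S v + T v)"

definition opscale :: "complex \<Rightarrow> ('a::complex_vector \<Rightarrow> 'a) \<Rightarrow> ('a \<Rightarrow> 'a)" where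
  "opscale c T = (\<lambda>v. c *\<^sub>C T v)"

definition gen_cstar :: "('a::chilbert_space \<Rightarrow> 'a) \<Rightarrow> ('a \<Rightarrow> 'a) set" where
  "gen_cstar x = \<Inter>{B. B \<subseteq> Kop \<and> x \<in> B
      \<and> (\<forall>a\<in>B. \<forall>b\<in>B. opadd a b \<in> B)
      \<and> (\<forall>c. \<forall>a\<in>B. opscale c a \<in> B)
      \<and> (\<forall>a\<in>B. \<forall>b\<in>B. a \<circ> b \<in> B)
      \<and> (\<forall>a\<in>B. adj a \<in> B)
      \<and> (\<forall>f S. (\<forall>n. f n \<in> B) \<and> S \<in> Kop \<and>
            (\<lambda>n. onorm (\<lambda>v. f n v - S v)) \<longlonglongrightarrow> 0 \<longrightarrow> S \<in> B)}"

definition dual_K :: "(('a::chilbert_space \<Rightarrow> 'a) \<Rightarrow> complex) \<Rightarrow> bool" where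
  "dual_K \<phi> \<longleftrightarrow> (\<forall>a\<in>Kop. \<forall>b\<in>Kop. \<phi> (opadd a b) = \<phi> a + \<phi> b)
      \<and> (\<forall>c. \<forall>a\<in>Kop. \<phi> (opscale c a) = c * \<phi> a)
      \<and> (\<exists>C. \<forall>a\<in>Kop. cmod (\<phi> a) \<le> C * onorm a)"

definition star_derivation :: "(('a::chilbert_space \<Rightarrow> 'a) \<Rightarrow> ('a \<Rightarrow> 'a)) \<Rightarrow> bool" where
  "star_derivation D \<longleftrightarrow> (\<forall>a\<in>Kop. D a \<in> Kop)
      \<and> (\<forall>a\<in>Kop. \<forall>b\<in>Kop. D (opadd a b) = opadd (D a) (D b))
      \<and> (\<forall>c. \<forall>a\<in>Kop. D (opscale c a) = opscale c (D a))
      \<and> (\<forall>a\<in>Kop. \<forall>b\<in>Kop. D (a \<circ> b) = opadd (D a \<circ> b) (a \<circ> D b))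
      \<and> (\<forall>a\<in>Kop. D (adj a) = adj (D a))"

definition weak_2_local_star_derivation :: "(('a::chilbert_space \<Rightarrow> 'a) \<Rightarrow> ('a \<Rightarrow> 'a)) \<Rightarrow> bool" where
  "weak_2_local_star_derivation \<Delta> \<longleftrightarrow> (\<forall>a\<in>Kop. \<Delta> a \<in> Kop)
      \<and> (\<forall>a\<in>Kop. \<forall>b\<in>Kop. \<forall>\<phi>. dual_K \<phi> \<longrightarrow>
           (\<exists>D. star_derivation D \<and> \<phi> (\<Delta> a) = \<phi> (D a) \<and> \<phi> (\<Delta> b) = \<phi> (D b)))"

text \<open>Quasi-linear operator, for maps with values in X = K(H) (the case needed here).\<close>
definition quasi_linear :: "(('a::chilbert_space \<Rightarrow> 'a) \<Rightarrow> ('a \<Rightarrow> 'a)) \<Rightarrow> bool" where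
  "quasi_linear \<mu> \<longleftrightarrow>
      (\<forall>x\<in>Kop. adj x = x \<longrightarrow>
          (\<forall>a\<in>gen_cstar x. \<forall>b\<in>gen_cstar x. \<mu> (opadd a b) = opadd (\<mu> a) (\<mu> b))
        \<and> (\<forall>c. \<forall>a\<in>gen_cstar x. \<mu> (opscale c a) = opscale c (\<mu> a)))
    \<and> (\<forall>a\<in>Kop. \<forall>b\<in>Kop. adj a = a \<longrightarrow> adj b = b \<longrightarrow>
          \<mu> (opadd a (opscale \<i> b)) = opadd (\<mu> a) (opscale \<i> (\<mu> b)))"

end

theory Submission
  imports Defs
begin

text \<open>Testing \<open>\<Delta>\<close> against the vector functionals \<open>S \<mapsto> \<langle>\<xi>, S \<eta>\<rangle>\<close> replaces it, at any two
  points, by a single \<open>*\<close>-derivation, which gives homogeneity at once. For self-adjoint \<open>a, b\<close>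
  and \<open>w = a + i b\<close>, the diagonal values \<open>\<langle>v, D a v\<rangle>\<close> of any \<open>*\<close>-derivation are real, so
  derivations agreeing with \<open>\<Delta>\<close> at \<open>(w, a)\<close> and at \<open>(w, b)\<close> fix the real and imaginary parts
  of \<open>\<langle>v, \<Delta> w v\<rangle>\<close>; an operator is determined by its quadratic form.

  For additivity on \<open>C\<^sup>*(x)\<close>, with \<open>x\<close> compact and self-adjoint: every \<open>c \<in> C\<^sup>*(x)\<close> is
  diagonal on the eigenvectors of \<open>x\<close>. If \<open>c \<eta> = \<alpha> \<eta>\<close> and \<open>c\<^sup>* \<xi> = \<nu> \<xi>\<close>, the Leibniz rule
  for \<open>c p = \<alpha> p\<close>, where \<open>p\<close> is \<open>\<parallel>\<eta>\<parallel>\<^sup>2\<close> times the projection onto \<open>\<eta>\<close>, gives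
  \<open>\<parallel>\<eta>\<parallel>\<^sup>2 \<langle>\<xi>, D c \<eta>\<rangle> = (\<alpha> - \<nu>\<^sup>*) \<langle>\<xi>, D p \<eta>\<rangle>\<close>. The right-hand side is additive in \<open>c\<close> and
  involves \<open>D\<close> only at \<open>c\<close> and \<open>p\<close>, so the same identity holds for \<open>\<Delta>\<close>. The eigenvectors of a
  compact self-adjoint operator are total, hence these matrix coefficients determine
  \<open>\<Delta>(a + b) = \<Delta> a + \<Delta> b\<close>.\<close>

section \<open>Complex inner product spaces\<close>

lemma scaleC_zero_left [simp]: "(0::complex) *\<^sub>C x = 0"
  using scaleR_scaleC[of 0 x] by simp

lemma scaleC_zero_right [simp]: "a *\<^sub>C (0::'a::complex_vector) = 0"
  using scaleC_add_right[of a 0 0] by simp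

lemma scaleC_minus_left: "(- a) *\<^sub>C x = - (a *\<^sub>C (x::'a::complex_vector))"
  using scaleC_add_left[of a "-a" x] by (simp add: eq_neg_iff_add_eq_0 add.commute)

lemma cinner_add_right: "cinner x (y + z) = cinner x y + cinner x z"
  using cinner_commute[of x "y + z"] cinner_commute[of y x] cinner_commute[of z x]
  by (simp add: cinner_add_left)

lemma cinner_scaleC_right: "cinner x (a *\<^sub>C y) = a * cinner x y"
  using cinner_commute[of x "a *\<^sub>C y"] cinner_commute[of y x] by (simp add: cinner_scaleC_left)

lemma cinner_zero_left [simp]: "cinner 0 y = 0"
  using cinner_add_left[of 0 0 y] by simp

lemma cinner_zero_right [simp]: "cinner y 0 = 0"
  using cinner_commute[of y 0] by simp

lemma cinner_minus_right: "cinner y (- x) = - cinner y x"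
  using cinner_add_right[of y x "- x"] by (simp add: eq_neg_iff_add_eq_0 add.commute)

lemma cinner_minus_left: "cinner (- x) y = - cinner x y"
  using cinner_add_left[of x "- x" y] by (simp add: eq_neg_iff_add_eq_0 add.commute)

lemma cinner_diff_left: "cinner (x - z) y = cinner x y - cinner z y"
  unfolding diff_conv_add_uminus by (simp only: cinner_add_left cinner_minus_left)

lemma cinner_diff_right: "cinner y (x - z) = cinner y x - cinner y z"
  unfolding diff_conv_add_uminus by (simp only: cinner_add_right cinner_minus_right)

lemma cinner_scaleR_right: "cinner x (r *\<^sub>R y) = r * cinner x y"
  by (simp add: scaleR_scaleC cinner_scaleC_right)

lemma cinner_self_eq_norm_square: "cinner x x = complex_of_real ((norm x)\<^sup>2)"
proof -
  have "Im (cinner x x) = 0"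
    using arg_cong[OF cinner_commute[of x x], of Im] by simp
  moreover have "Re (cinner x x) = (norm x)\<^sup>2"
    using norm_eq_sqrt_cinner[of x] cinner_ge_zero[of x] by simp
  ultimately show ?thesis by (simp add: complex_eq_iff)
qed

lemma norm_add_square_cinner:
  "(norm (x + y))\<^sup>2 = (norm x)\<^sup>2 + 2 * Re (cinner x y) + (norm y)\<^sup>2"
proof -
  have "Re (cinner (x + y) (x + y)) =
      Re (cinner x x) + Re (cinner x y) + Re (cinner y x) + Re (cinner y y)"
    by (simp add: cinner_add_left cinner_add_right)
  moreover have "Re (cinner y x) = Re (cinner x y)"
    using cinner_commute[of y x] by simp
  ultimately show ?thesis by (simp add: cinner_self_eq_norm_square)
qed

lemma norm_diff_square_cinner:
  "(norm (x - y))\<^sup>2 = (norm x)\<^sup>2 - 2 * Re (cinner x y) + (norm y)\<^sup>2"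
  using norm_add_square_cinner[of x "- y"] by (simp add: cinner_minus_right)

lemma parallelogram_law_cinner:
  fixes a b :: "'a::complex_inner"
  shows "(norm (a - b))\<^sup>2 + (norm (a + b))\<^sup>2 = 2 * (norm a)\<^sup>2 + 2 * (norm b)\<^sup>2"
  by (simp add: norm_add_square_cinner norm_diff_square_cinner)

lemma abs_Re_cinner_le: "\<bar>Re (cinner x y)\<bar> \<le> norm x * norm y"
proof (cases "y = 0")
  case False
  define R where "R = Re (cinner x y)"
  define n where "n = (norm y)\<^sup>2"
  have n: "n > 0" using False by (simp add: n_def)
  have "0 \<le> (norm (x - (R / n) *\<^sub>R y))\<^sup>2" by simp
  also have "\<dots> = (norm x)\<^sup>2 - 2 * (R / n) * R + (R / n)\<^sup>2 * n"
    by (simp add: norm_diff_square_cinner cinner_scaleR_right R_def n_def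
        power_mult_distrib power_divide)
  also have "\<dots> = (norm x)\<^sup>2 - R\<^sup>2 / n"
    using n by (simp add: field_simps power2_eq_square)
  finally have "R\<^sup>2 \<le> (norm x * norm y)\<^sup>2"
    using n by (simp add: field_simps n_def power_mult_distrib)
  then show ?thesis
    using power2_le_imp_le[of "\<bar>R\<bar>" "norm x * norm y"] by (simp add: R_def)
qed simp

lemma cinner_Cauchy_Schwarz: "cmod (cinner x y) \<le> norm x * norm y"
proof (cases "cinner x y = 0")
  case False
  define c where "c = cnj (cinner x y) / cmod (cinner x y)"
  have "cnj (cinner x y) * cinner x y = complex_of_real ((cmod (cinner x y))\<^sup>2)"
    by (metis complex_norm_square mult.commute)
  then have "Re (cinner x (c *\<^sub>C y)) = cmod (cinner x y)"
    using False by (simp add: c_def cinner_scaleC_right power2_eq_square field_simps)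
  moreover have "cmod c = 1"
    using False by (simp add: c_def norm_divide)
  ultimately show ?thesis
    using abs_Re_cinner_le[of x "c *\<^sub>C y"] by (simp add: norm_scaleC)
qed simp

lemma cinner_extensionality: "(\<And>x. cinner x z = cinner x z') \<Longrightarrow> z = z'"
  using cinner_eq_zero_iff[of "z - z'"] by (simp add: cinner_diff_right)

section \<open>Compact operators\<close>

lemma compact_closure_of_subset:
  fixes A C :: "'b::metric_space set"
  assumes "compact C" "A \<subseteq> C"
  shows "compact (closure A)"
proof -
  have "closure A = C \<inter> closure A"
    using assms by (auto dest: closure_minimal[OF _ compact_imp_closed])
  then show ?thesis
    using compact_Int_closed[OF assms(1) closed_closure, of A] by simp
qed

lemma KopI:
  assumes "\<And>x y. T (x + y) = T x + T y" "\<And>c x. T (c *\<^sub>C x) = c *\<^sub>C T x"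
    "compact (closure (T ` cball 0 1))"
  shows "T \<in> Kop"
  using assms unfolding Kop_def compact_op_def clinear_map_def by auto

lemma KopD:
  assumes "T \<in> Kop"
  shows "T (x + y) = T x + T y" "T (c *\<^sub>C x) = c *\<^sub>C T x"
    "compact (closure (T ` cball 0 1))"
  using assms unfolding Kop_def compact_op_def clinear_map_def by auto

lemma Kop_scaleR: "T \<in> Kop \<Longrightarrow> T (r *\<^sub>R x) = r *\<^sub>R T x"
  using KopD(2)[of T "complex_of_real r" x] by (simp add: scaleR_scaleC)

lemma Kop_bounded_on_unit_ball:
  assumes "T \<in> Kop"
  obtains B where "B > 0" "\<And>v. norm v \<le> 1 \<Longrightarrow> norm (T v) \<le> B"
proof -
  have "bounded (T ` cball 0 1)"
    using KopD(3)[OF assms] compact_imp_bounded bounded_subset closure_subset by blast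
  then obtain B where "\<forall>y\<in>T ` cball 0 1. norm y \<le> B"
    unfolding bounded_iff by blast
  then show ?thesis
    using that[of "\<bar>B\<bar> + 1"] by force
qed

lemma Kop_bounded_linear:
  assumes T: "T \<in> Kop"
  shows "bounded_linear T"
proof -
  obtain B where B: "B > 0" "\<And>v. norm v \<le> 1 \<Longrightarrow> norm (T v) \<le> B"
    using Kop_bounded_on_unit_ball T by blast
  show ?thesis
  proof (rule bounded_linear_intro[where K = B])
    show "norm (T x) \<le> norm x * B" for x
    proof (cases "x = 0")
      case False
      have "T x = norm x *\<^sub>R T ((1 / norm x) *\<^sub>R x)"
        using False Kop_scaleR[OF T] by simp
      moreover have "norm x * norm (T ((1 / norm x) *\<^sub>R x)) \<le> norm x * B"
        using B(2) False by (intro mult_left_mono) simp_all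
      ultimately show ?thesis
        by simp
    qed (use Kop_scaleR[OF T, of 0 0] in simp)
  qed (simp_all add: KopD(1)[OF T] Kop_scaleR[OF T])
qed

lemma norm_Kop_le_onorm: "T \<in> Kop \<Longrightarrow> norm (T x) \<le> onorm T * norm x"
  using onorm Kop_bounded_linear by blast

lemma Kop_zero: "T \<in> Kop \<Longrightarrow> T 0 = 0"
  using Kop_scaleR[of T 0 0] by simp

lemma Kop_diff: "T \<in> Kop \<Longrightarrow> T (x - y) = T x - T y"
  using Kop_bounded_linear linear_diff bounded_linear.linear by blast

lemma bounded_linear_scaleC_right: "bounded_linear (\<lambda>v::'a::complex_normed_vector. c *\<^sub>C v)"
proof (rule bounded_linear_intro[where K = "cmod c"])
  show "c *\<^sub>C (r *\<^sub>R x) = r *\<^sub>R (c *\<^sub>C x)" for r and x :: 'a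
    by (simp add: scaleR_scaleC scaleC_scaleC mult.commute)
qed (simp_all add: scaleC_add_right norm_scaleC mult.commute)

lemma bounded_linear_scaleC_left: "bounded_linear (\<lambda>c. c *\<^sub>C (e::'a::complex_normed_vector))"
proof (rule bounded_linear_intro[where K = "norm e"])
  show "(r *\<^sub>R c) *\<^sub>C e = r *\<^sub>R (c *\<^sub>C e)" for r c
    by (simp add: scaleR_scaleC scaleC_scaleC scaleR_conv_of_real)
qed (simp_all add: scaleC_add_left norm_scaleC)

lemma Kop_opadd:
  assumes S: "S \<in> Kop" and T: "T \<in> Kop"
  shows "opadd S T \<in> Kop"
proof (rule KopI)
  show "opadd S T (x + y) = opadd S T x + opadd S T y" for x y
    by (simp add: opadd_def KopD(1)[OF S] KopD(1)[OF T] algebra_simps)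
  show "opadd S T (c *\<^sub>C x) = c *\<^sub>C opadd S T x" for c x
    by (simp add: opadd_def KopD(2)[OF S] KopD(2)[OF T] scaleC_add_right)
  have "opadd S T ` cball 0 1 \<subseteq>
      {a + b |a b. a \<in> closure (S ` cball 0 1) \<and> b \<in> closure (T ` cball 0 1)}"
    by (fastforce simp: opadd_def intro: closure_subset[THEN subsetD])
  then show "compact (closure (opadd S T ` cball 0 1))"
    using compact_sums[OF KopD(3)[OF S] KopD(3)[OF T]] compact_closure_of_subset by blast
qed

lemma Kop_opscale:
  assumes T: "T \<in> Kop"
  shows "opscale c T \<in> Kop"
proof (rule KopI)
  show "opscale c T (x + y) = opscale c T x + opscale c T y" for x y
    by (simp add: opscale_def KopD(1)[OF T] scaleC_add_right)
  show "opscale c T (d *\<^sub>C x) = d *\<^sub>C opscale c T x" for d x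
    by (simp add: opscale_def KopD(2)[OF T] scaleC_scaleC mult.commute)
  have "compact ((\<lambda>v. c *\<^sub>C v) ` closure (T ` cball 0 1))"
    using compact_continuous_image[OF _ KopD(3)[OF T]]
      linear_continuous_on[OF bounded_linear_scaleC_right] by blast
  moreover have "opscale c T ` cball 0 1 \<subseteq> (\<lambda>v. c *\<^sub>C v) ` closure (T ` cball 0 1)"
    by (auto simp: opscale_def intro: closure_subset[THEN subsetD])
  ultimately show "compact (closure (opscale c T ` cball 0 1))"
    using compact_closure_of_subset by blast
qed

lemma Kop_image_cball_subset:
  assumes T: "T \<in> Kop" and "B > 0"
  shows "T ` cball 0 B \<subseteq> (\<lambda>w. B *\<^sub>R w) ` closure (T ` cball 0 1)"
proof
  fix y assume "y \<in> T ` cball 0 B"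
  then obtain v where v: "norm v \<le> B" "y = T v" by auto
  have "(1 / B) *\<^sub>R v \<in> cball 0 1"
    using v \<open>B > 0\<close> by (simp add: field_simps)
  moreover have "T v = B *\<^sub>R T ((1 / B) *\<^sub>R v)"
    using Kop_scaleR[OF T] \<open>B > 0\<close> by simp
  ultimately show "y \<in> (\<lambda>w. B *\<^sub>R w) ` closure (T ` cball 0 1)"
    using v(2) by (intro rev_image_eqI[of "T ((1 / B) *\<^sub>R v)"])
      (auto intro: closure_subset[THEN subsetD])
qed

lemma Kop_comp:
  assumes S: "S \<in> Kop" and T: "T \<in> Kop"
  shows "S \<circ> T \<in> Kop"
proof (rule KopI)
  show "(S \<circ> T) (x + y) = (S \<circ> T) x + (S \<circ> T) y" for x y
    by (simp add: KopD(1)[OF S] KopD(1)[OF T])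
  show "(S \<circ> T) (c *\<^sub>C x) = c *\<^sub>C (S \<circ> T) x" for c x
    by (simp add: KopD(2)[OF S] KopD(2)[OF T])
  obtain B where B: "B > 0" "\<And>v. norm v \<le> 1 \<Longrightarrow> norm (T v) \<le> B"
    using Kop_bounded_on_unit_ball T by blast
  then have "(S \<circ> T) ` cball 0 1 \<subseteq> S ` cball 0 B"
    by auto
  then show "compact (closure ((S \<circ> T) ` cball 0 1))"
    using Kop_image_cball_subset[OF S B(1)] compact_scaling[OF KopD(3)[OF S]]
      compact_closure_of_subset by (meson order_trans)
qed

lemma Kop_minus:
  assumes "S \<in> Kop" "T \<in> Kop"
  shows "(\<lambda>v. S v - T v) \<in> Kop"
proof -
  have "(\<lambda>v. S v - T v) = opadd S (opscale (-1) T)"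
    by (auto simp: opadd_def opscale_def scaleC_minus_left scaleC_one)
  then show ?thesis
    using Kop_opadd[OF assms(1) Kop_opscale[OF assms(2)]] by simp
qed

text \<open>\<open>\<parallel>e\<parallel>\<^sup>2\<close> times the orthogonal projection onto \<open>e\<close>.\<close>
definition rank_one :: "'a::complex_inner \<Rightarrow> 'a \<Rightarrow> 'a" where
  "rank_one e = (\<lambda>v. cinner e v *\<^sub>C e)"

lemma rank_one_Kop: "rank_one e \<in> Kop"
proof (rule KopI)
  show "rank_one e (x + y) = rank_one e x + rank_one e y" for x y
    by (simp add: rank_one_def cinner_add_right scaleC_add_left)
  show "rank_one e (c *\<^sub>C x) = c *\<^sub>C rank_one e x" for c x
    by (simp add: rank_one_def cinner_scaleC_right scaleC_scaleC)
  have "compact ((\<lambda>c. c *\<^sub>C e) ` cball 0 (norm e))"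
    using linear_continuous_on[OF bounded_linear_scaleC_left]
    by (intro compact_continuous_image compact_cball) (blast intro: continuous_on_subset)
  moreover have "rank_one e ` cball 0 1 \<subseteq> (\<lambda>c. c *\<^sub>C e) ` cball 0 (norm e)"
  proof
    fix y assume "y \<in> rank_one e ` cball 0 1"
    then obtain v where v: "norm v \<le> 1" "y = cinner e v *\<^sub>C e"
      by (auto simp: rank_one_def)
    have "cmod (cinner e v) \<le> norm e"
      using cinner_Cauchy_Schwarz[of e v] mult_left_mono[OF v(1), of "norm e"] by simp
    then show "y \<in> (\<lambda>c. c *\<^sub>C e) ` cball 0 (norm e)"
      using v(2) by auto
  qed
  ultimately show "compact (closure (rank_one e ` cball 0 1))"
    using compact_closure_of_subset by blast
qed

section \<open>The Riesz representation theorem and adjoints\<close>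

lemma minimizing_sequence_Cauchy:
  fixes u :: "'a::complex_inner"
  assumes midpoint: "\<And>a b. a \<in> K \<Longrightarrow> b \<in> K \<Longrightarrow> (1/2) *\<^sub>R (a + b) \<in> K"
    and d: "0 \<le> d" "\<And>k. k \<in> K \<Longrightarrow> d \<le> norm (u - k)"
    and k: "\<And>n. k n \<in> K" "\<And>n. norm (u - k n) \<le> d + e n"
    and e: "e \<longlonglongrightarrow> 0"
  shows "Cauchy k"
proof (rule metric_CauchyI)
  define b where "b n = 4 * d * e n + 2 * (e n)\<^sup>2" for n
  have dist_square: "(norm (k m - k n))\<^sup>2 \<le> b m + b n" for m n
  proof -
    have "2 * d \<le> norm ((u - k n) + (u - k m))"
    proof -
      have "(u - k n) + (u - k m) = 2 *\<^sub>R (u - (1/2) *\<^sub>R (k m + k n))"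
        by (simp add: algebra_simps scaleR_2)
      then show ?thesis
        using d(2)[OF midpoint[OF k(1) k(1)]] by simp
    qed
    then have "(2 * d)\<^sup>2 \<le> (norm ((u - k n) + (u - k m)))\<^sup>2"
      by (rule power_mono) (simp add: d(1))
    moreover have "(norm (u - k m))\<^sup>2 \<le> (d + e m)\<^sup>2" "(norm (u - k n))\<^sup>2 \<le> (d + e n)\<^sup>2"
      using k(2) by (auto intro: power_mono)
    moreover have "(norm (k m - k n))\<^sup>2 =
        2 * (norm (u - k n))\<^sup>2 + 2 * (norm (u - k m))\<^sup>2 - (norm ((u - k n) + (u - k m)))\<^sup>2"
      using parallelogram_law_cinner[of "u - k n" "u - k m"] by (simp add: norm_minus_commute)
    ultimately show ?thesis
      by (simp add: b_def power2_eq_square algebra_simps)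
  qed
  have "b \<longlonglongrightarrow> 0"
    unfolding b_def using tendsto_add[OF tendsto_mult[OF tendsto_const e] tendsto_mult[OF tendsto_const tendsto_power[OF e]],
        of "4 * d" 2 2]
    by simp
  fix \<epsilon> :: real assume "0 < \<epsilon>"
  then have "\<forall>\<^sub>F n in sequentially. b n < \<epsilon>\<^sup>2 / 2"
    by (intro order_tendstoD(2)[OF \<open>b \<longlonglongrightarrow> 0\<close>]) simp
  then obtain N where N: "\<And>n. n \<ge> N \<Longrightarrow> b n < \<epsilon>\<^sup>2 / 2"
    unfolding eventually_sequentially by blast
  have "dist (k m) (k n) < \<epsilon>" if "m \<ge> N" "n \<ge> N" for m n
  proof -
    have "(norm (k m - k n))\<^sup>2 < \<epsilon>\<^sup>2"
      using dist_square[of m n] N[OF that(1)] N[OF that(2)] by linarith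
    then show ?thesis
      using \<open>0 < \<epsilon>\<close> by (simp add: dist_norm power_less_imp_less_base)
  qed
  then show "\<exists>M. \<forall>m\<ge>M. \<forall>n\<ge>M. dist (k m) (k n) < \<epsilon>" by blast
qed

lemma exists_nearest_point:
  fixes u :: "'a::chilbert_space"
  assumes "closed K" "K \<noteq> {}"
    and midpoint: "\<And>a b. a \<in> K \<Longrightarrow> b \<in> K \<Longrightarrow> (1/2) *\<^sub>R (a + b) \<in> K"
  obtains k0 where "k0 \<in> K" "\<And>k. k \<in> K \<Longrightarrow> norm (u - k0) \<le> norm (u - k)"
proof -
  define d where "d = Inf ((\<lambda>k. norm (u - k)) ` K)"
  have bdd: "bdd_below ((\<lambda>k. norm (u - k)) ` K)"
    by (rule bdd_belowI[of _ 0]) auto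
  have d_le: "d \<le> norm (u - k)" if "k \<in> K" for k
    unfolding d_def using bdd that by (auto intro!: cInf_lower)
  have d_nonneg: "0 \<le> d"
    unfolding d_def using assms(2) by (intro cInf_greatest) auto
  define e where "e n = inverse (real (Suc n))" for n
  have "\<exists>k\<in>K. norm (u - k) < d + e n" for n
    using cInf_less_iff[OF _ bdd, of "d + e n"] assms(2) by (simp add: d_def e_def)
  then obtain k where k: "\<And>n. k n \<in> K" "\<And>n. norm (u - k n) < d + e n"
    by metis
  have e: "e \<longlonglongrightarrow> 0"
    unfolding e_def by (rule LIMSEQ_inverse_real_of_nat)
  have "Cauchy k"
    using minimizing_sequence_Cauchy[OF midpoint d_nonneg d_le k(1) less_imp_le[OF k(2)] e] .
  then obtain k0 where k0: "k \<longlonglongrightarrow> k0"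
    using Cauchy_convergent_iff convergent_def by blast
  show ?thesis
  proof
    show "k0 \<in> K"
      using closed_sequentially[OF assms(1)] k(1) k0 by blast
    have "norm (u - k0) \<le> d + 0"
    proof (rule tendsto_le[OF _ _ tendsto_norm[OF tendsto_diff[OF tendsto_const k0]]])
      show "(\<lambda>n. d + e n) \<longlonglongrightarrow> d + 0"
        by (intro tendsto_intros e)
    qed (use k(2) less_imp_le in \<open>auto intro: always_eventually\<close>)
    then show "norm (u - k0) \<le> norm (u - k)" if "k \<in> K" for k
      using d_le[OF that] by simp
  qed
qed

lemma nearest_point_orthogonal:
  fixes w :: "'a::complex_inner"
  assumes scale: "\<And>c t. t \<in> K \<Longrightarrow> c *\<^sub>C t \<in> K"
    and nearest: "\<And>t. t \<in> K \<Longrightarrow> norm w \<le> norm (w - t)"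
    and "t \<in> K"
  shows "cinner w t = 0"
proof (rule ccontr)
  assume "cinner w t \<noteq> 0"
  define q where "q = (cmod (cinner w t))\<^sup>2"
  have q: "q > 0"
    using \<open>cinner w t \<noteq> 0\<close> by (simp add: q_def)
  text \<open>A small step from \<open>0\<close> towards the projection of \<open>w\<close> onto \<open>t\<close> is closer to \<open>w\<close>.\<close>
  define r where "r = 1 / ((norm t)\<^sup>2 + 1)"
  have "(norm t)\<^sup>2 + 1 > 0"
    by (simp add: add_nonneg_pos)
  then have r: "r > 0" "r * (norm t)\<^sup>2 < 1"
    by (auto simp: r_def field_simps)
  define s where "s = complex_of_real r * cinner t w"
  have "(norm w)\<^sup>2 \<le> (norm (w - s *\<^sub>C t))\<^sup>2"
    using nearest[OF scale[OF \<open>t \<in> K\<close>]] by (simp add: power_mono)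
  also have "\<dots> = (norm w)\<^sup>2 - 2 * Re (cinner w (s *\<^sub>C t)) + (norm (s *\<^sub>C t))\<^sup>2"
    by (rule norm_diff_square_cinner)
  also have "Re (cinner w (s *\<^sub>C t)) = r * q"
  proof -
    have "cnj (cinner w t) * cinner w t = complex_of_real q"
      unfolding q_def by (metis complex_norm_square mult.commute)
    then show ?thesis
      by (simp add: s_def cinner_scaleC_right cinner_commute[of t w] mult.assoc)
  qed
  also have "(norm (s *\<^sub>C t))\<^sup>2 = r\<^sup>2 * q * (norm t)\<^sup>2"
    using r(1) by (simp add: s_def norm_scaleC norm_mult cinner_commute[of t w]
        power_mult_distrib q_def)
  finally have "0 \<le> r * q * (r * (norm t)\<^sup>2 - 2)"
    by (simp add: algebra_simps power2_eq_square)
  moreover have "r * q * (r * (norm t)\<^sup>2 - 2) < 0"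
    using r q by (intro mult_pos_neg) auto
  ultimately show False by simp
qed

lemma Riesz_representation:
  fixes g :: "'a::chilbert_space \<Rightarrow> complex"
  assumes add: "\<And>x y. g (x + y) = g x + g y" and scale: "\<And>c x. g (c *\<^sub>C x) = c * g x"
    and bound: "\<And>x. cmod (g x) \<le> C * norm x"
  obtains z where "\<And>x. g x = cinner z x"
proof (cases "\<forall>x. g x = 0")
  case False
  then obtain u where gu: "g u \<noteq> 0" by blast
  have g: "bounded_linear g"
  proof (rule bounded_linear_intro[where K = C])
    show "g (r *\<^sub>R x) = r *\<^sub>R g x" for r x
      using scale[of "complex_of_real r" x] by (simp add: scaleR_scaleC scaleR_conv_of_real)
  qed (simp_all add: add bound mult.commute)
  define K where "K = {k. g k = 0}"
  have "closed K"
    unfolding K_def using linear_continuous_on[OF g] by (intro closed_Collect_eq) auto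
  moreover have "0 \<in> K"
    using scale[of 0 0] by (simp add: K_def)
  moreover have "(1/2) *\<^sub>R (a + b) \<in> K" if "a \<in> K" "b \<in> K" for a b
    using that by (simp add: K_def add scaleR_scaleC scale)
  ultimately obtain k0 where k0: "k0 \<in> K" "\<And>k. k \<in> K \<Longrightarrow> norm (u - k0) \<le> norm (u - k)"
    using exists_nearest_point[of K u] by blast
  define w where "w = u - k0"
  have g_diff: "g (x - y) = g x - g y" for x y
    using add[of "x - y" y] by (simp add: algebra_simps)
  have gw: "g w = g u"
    using k0(1) by (simp add: w_def K_def g_diff)
  have orth: "cinner w t = 0" if "t \<in> K" for t
  proof (rule nearest_point_orthogonal[OF _ _ that])
    show "c *\<^sub>C t \<in> K" if "t \<in> K" for c t
      using that by (simp add: K_def scale)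
    show "norm w \<le> norm (w - t)" if "t \<in> K" for t
      using k0(2)[of "k0 + t"] that k0(1) by (simp add: K_def add w_def algebra_simps)
  qed
  have ww: "cinner w w \<noteq> 0"
    using gw gu scale[of 0 0] by (auto simp: cinner_eq_zero_iff)
  have "g x = cinner (cnj (g w / cinner w w) *\<^sub>C w) x" for x
  proof -
    have "g (x - (g x / g w) *\<^sub>C w) = 0"
      using gu gw by (simp add: g_diff scale)
    then have "cinner w (x - (g x / g w) *\<^sub>C w) = 0"
      using orth by (simp add: K_def)
    then have "cinner w x = (g x / g w) * cinner w w"
      by (simp add: cinner_diff_right cinner_scaleC_right)
    then show ?thesis
      using ww gu gw by (simp add: cinner_scaleC_left field_simps)
  qed
  then show ?thesis by (rule that)
qed (use that[of 0] in simp)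

lemma adj_eqI:
  assumes "\<And>x y. cinner (S x) y = cinner x (G y)"
  shows "adj S = G"
  unfolding adj_def
proof
  show "(THE z. \<forall>x. cinner (S x) y = cinner x z) = G y" for y
    using assms by (intro the_equality) (auto intro: cinner_extensionality)
qed

lemma Kop_has_adjoint:
  fixes T :: "'a::chilbert_space \<Rightarrow> 'a"
  assumes T: "T \<in> Kop"
  shows "\<exists>G. \<forall>x y. cinner (T x) y = cinner x (G y)"
proof -
  have "\<exists>z. \<forall>x. cinner (T x) y = cinner x z" for y
  proof -
    have "cmod (cinner y (T x)) \<le> (norm y * onorm T) * norm x" for x
    proof -
      have "cmod (cinner y (T x)) \<le> norm y * norm (T x)"
        by (rule cinner_Cauchy_Schwarz)
      also have "\<dots> \<le> norm y * (onorm T * norm x)"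
        by (intro mult_left_mono norm_Kop_le_onorm[OF T]) simp_all
      finally show ?thesis
        by (simp add: mult.assoc)
    qed
    then obtain z where "\<And>x. cinner y (T x) = cinner z x"
      by (rule Riesz_representation[of "\<lambda>x. cinner y (T x)" "norm y * onorm T", rotated 2])
        (simp_all add: KopD(1,2)[OF T] cinner_add_right cinner_scaleC_right)
    then show ?thesis
      by (metis cinner_commute)
  qed
  then show ?thesis by metis
qed

context
  fixes T :: "'a::chilbert_space \<Rightarrow> 'a"
  assumes T: "T \<in> Kop"
begin

lemma cinner_adj_right: "cinner (T x) y = cinner x (adj T y)"
  using Kop_has_adjoint[OF T] adj_eqI by metis

lemma cinner_adj_left: "cinner (adj T y) x = cinner y (T x)"
  using cinner_adj_right[of x y] cinner_commute[of "adj T y" x] cinner_commute[of y "T x"] by simp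

lemma adj_adj: "adj (adj T) = T"
  by (rule adj_eqI) (rule cinner_adj_left)

lemma adj_add: "adj T (y + y') = adj T y + adj T y'"
  by (rule cinner_extensionality) (simp add: cinner_adj_right[symmetric] cinner_add_right)

lemma adj_scaleC: "adj T (c *\<^sub>C y) = c *\<^sub>C adj T y"
  by (rule cinner_extensionality) (simp add: cinner_adj_right[symmetric] cinner_scaleC_right)

lemma adj_diff: "adj T (y - y') = adj T y - adj T y'"
  by (rule cinner_extensionality) (simp add: cinner_adj_right[symmetric] cinner_diff_right)

lemma norm_adj_le: "norm (adj T y) \<le> onorm T * norm y"
proof (cases "adj T y = 0")
  case False
  have "(norm (adj T y))\<^sup>2 = Re (cinner (T (adj T y)) y)"
    by (simp add: cinner_self_eq_norm_square cinner_adj_right)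
  also have "\<dots> \<le> norm (T (adj T y)) * norm y"
    using complex_Re_le_cmod cinner_Cauchy_Schwarz order_trans by blast
  also have "\<dots> \<le> onorm T * norm (adj T y) * norm y"
    by (intro mult_right_mono norm_Kop_le_onorm[OF T]) auto
  finally show ?thesis
    using False by (simp add: power2_eq_square mult_ac)
qed (use onorm_pos_le[OF Kop_bounded_linear[OF T]] in simp)

end

context
  fixes S T :: "'a::chilbert_space \<Rightarrow> 'a"
  assumes S: "S \<in> Kop" and T: "T \<in> Kop"
begin

lemma adj_opadd: "adj (opadd S T) = opadd (adj S) (adj T)"
  by (rule adj_eqI) (simp add: opadd_def cinner_add_left cinner_add_right cinner_adj_right[OF S] cinner_adj_right[OF T])

lemma adj_comp: "adj (S \<circ> T) = adj T \<circ> adj S"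
  by (rule adj_eqI) (simp add: cinner_adj_right[OF S] cinner_adj_right[OF T])

lemma adj_minus: "adj (\<lambda>v. S v - T v) = (\<lambda>v. adj S v - adj T v)"
  by (rule adj_eqI) (simp add: cinner_diff_left cinner_diff_right cinner_adj_right[OF S] cinner_adj_right[OF T])

end

lemma adj_opscale:
  fixes T :: "'a::chilbert_space \<Rightarrow> 'a"
  shows "T \<in> Kop \<Longrightarrow> adj (opscale c T) = opscale (cnj c) (adj T)"
  by (rule adj_eqI) (simp add: opscale_def cinner_scaleC_left cinner_scaleC_right cinner_adj_right)

section \<open>Adjoints of compact operators are compact\<close>

lemma compact_closure_sequentialI:
  fixes S :: "'b::real_normed_vector set"
  assumes subseq: "\<And>f :: nat \<Rightarrow> 'b. (\<And>n. f n \<in> S) \<Longrightarrow> \<exists>r l. strict_mono r \<and> (f \<circ> r) \<longlonglongrightarrow> l"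
  shows "compact (closure S)"
  unfolding compact_eq_seq_compact_metric seq_compact_def
proof (intro allI impI)
  fix f :: "nat \<Rightarrow> 'b" assume f: "\<forall>n. f n \<in> closure S"
  define e where "e n = inverse (real (Suc n))" for n
  have "\<exists>y\<in>S. dist y (f n) < e n" for n
    using f unfolding closure_approachable by (simp add: e_def)
  then obtain g where g: "\<And>n. g n \<in> S" "\<And>n. dist (g n) (f n) < e n"
    by metis
  obtain r l where r: "strict_mono r" "(g \<circ> r) \<longlonglongrightarrow> l"
    using subseq[of g] g(1) by blast
  have "(\<lambda>n. g (r n) - f (r n)) \<longlonglongrightarrow> 0"
  proof (rule Lim_null_comparison)
    show "\<forall>\<^sub>F n in sequentially. norm (g (r n) - f (r n)) \<le> e (r n)"
      using g(2) by (simp add: dist_norm less_imp_le)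
    show "(\<lambda>n. e (r n)) \<longlonglongrightarrow> 0"
      using LIMSEQ_subseq_LIMSEQ[OF LIMSEQ_inverse_real_of_nat r(1)] by (simp add: e_def o_def)
  qed
  then have "(f \<circ> r) \<longlonglongrightarrow> l"
    using Lim_transform2[OF r(2)[unfolded o_def]] by (simp add: o_def)
  moreover have "l \<in> closure S"
    unfolding closure_sequential using g(1) r(2) by (intro exI[of _ "g \<circ> r"]) simp
  ultimately show "\<exists>l\<in>closure S. \<exists>r. strict_mono r \<and> (f \<circ> r) \<longlonglongrightarrow> l"
    using r(1) by blast
qed

lemma Cauchy_if_square_dominated:
  fixes a :: "nat \<Rightarrow> 'a::real_normed_vector" and b :: "nat \<Rightarrow> 'b::real_normed_vector"
  assumes "Cauchy b" "C > 0" and dom: "\<And>m n. (norm (a m - a n))\<^sup>2 \<le> C * norm (b m - b n)"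
  shows "Cauchy a"
proof (rule metric_CauchyI)
  fix \<epsilon> :: real assume "0 < \<epsilon>"
  then obtain N where N: "\<And>m n. m \<ge> N \<Longrightarrow> n \<ge> N \<Longrightarrow> dist (b m) (b n) < \<epsilon>\<^sup>2 / C"
    using metric_CauchyD[OF \<open>Cauchy b\<close>, of "\<epsilon>\<^sup>2 / C"] \<open>C > 0\<close> by auto
  have "dist (a m) (a n) < \<epsilon>" if "m \<ge> N" "n \<ge> N" for m n
  proof -
    have "(norm (a m - a n))\<^sup>2 < \<epsilon>\<^sup>2"
      using dom[of m n] N[OF that] \<open>C > 0\<close> by (simp add: dist_norm field_simps)
    then show ?thesis
      using \<open>0 < \<epsilon>\<close> by (simp add: dist_norm power_less_imp_less_base)
  qed
  then show "\<exists>M. \<forall>m\<ge>M. \<forall>n\<ge>M. dist (a m) (a n) < \<epsilon>" by blast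
qed

lemma norm_adj_diff_square_le:
  fixes T :: "'a::chilbert_space \<Rightarrow> 'a"
  assumes T: "T \<in> Kop" and "norm y \<le> 1" "norm y' \<le> 1"
  shows "(norm (adj T y - adj T y'))\<^sup>2 \<le> 2 * norm (T (adj T y) - T (adj T y'))"
proof -
  define d where "d = adj T y - adj T y'"
  have "cinner d d = cinner (y - y') (T d)"
    unfolding d_def adj_diff[OF T, symmetric] by (rule cinner_adj_left[OF T])
  then have "(norm d)\<^sup>2 = Re (cinner (y - y') (T d))"
    by (metis cinner_self_eq_norm_square Re_complex_of_real)
  also have "\<dots> \<le> norm (y - y') * norm (T d)"
    by (rule order_trans[OF complex_Re_le_cmod cinner_Cauchy_Schwarz])
  also have "\<dots> \<le> 2 * norm (T d)"
    using norm_triangle_ineq4[of y y'] assms(2,3) by (intro mult_right_mono) simp_all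
  finally show ?thesis
    by (simp add: d_def Kop_diff[OF T])
qed

lemma adj_Kop:
  fixes T :: "'a::chilbert_space \<Rightarrow> 'a"
  assumes T: "T \<in> Kop"
  shows "adj T \<in> Kop"
proof (rule KopI)
  show "adj T (x + y) = adj T x + adj T y" for x y
    by (rule adj_add[OF T])
  show "adj T (c *\<^sub>C x) = c *\<^sub>C adj T x" for c x
    by (rule adj_scaleC[OF T])
  show "compact (closure (adj T ` cball 0 1))"
  proof (rule compact_closure_sequentialI)
    fix f :: "nat \<Rightarrow> 'a" assume "\<And>n. f n \<in> adj T ` cball 0 1"
    then have "\<forall>n. \<exists>v. norm v \<le> 1 \<and> f n = adj T v"
      by force
    then obtain y where y: "\<And>n. norm (y n) \<le> 1" "\<And>n. f n = adj T (y n)"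
      by metis
    define R where "R = onorm T + 1"
    have onorm_nonneg: "onorm T \<ge> 0"
      by (rule onorm_pos_le[OF Kop_bounded_linear[OF T]])
    have R: "R > 0"
      using onorm_nonneg by (simp add: R_def)
    have "\<forall>n. T (f n) \<in> (\<lambda>w. R *\<^sub>R w) ` closure (T ` cball 0 1)"
    proof
      fix n
      have "norm (f n) \<le> onorm T * 1"
        unfolding y(2) by (rule order_trans[OF norm_adj_le[OF T] mult_left_mono[OF y(1) onorm_nonneg]])
      then have "f n \<in> cball 0 R"
        by (simp add: R_def)
      then show "T (f n) \<in> (\<lambda>w. R *\<^sub>R w) ` closure (T ` cball 0 1)"
        using Kop_image_cball_subset[OF T R] by blast
    qed
    then obtain l r where r: "strict_mono r" "((\<lambda>n. T (f n)) \<circ> r) \<longlonglongrightarrow> l"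
      by (rule seq_compactE[OF compact_imp_seq_compact[OF compact_scaling[OF KopD(3)[OF T]]]]) blast
    have "Cauchy (f \<circ> r)"
    proof (rule Cauchy_if_square_dominated)
      show "Cauchy ((\<lambda>n. T (f n)) \<circ> r)"
        using r(2) by (rule LIMSEQ_imp_Cauchy)
      show "(norm ((f \<circ> r) m - (f \<circ> r) n))\<^sup>2 \<le> 2 * norm (((\<lambda>n. T (f n)) \<circ> r) m - ((\<lambda>n. T (f n)) \<circ> r) n)"
        for m n
        using norm_adj_diff_square_le[OF T y(1) y(1)] y(2) by simp
    qed simp
    then show "\<exists>r l. strict_mono r \<and> (f \<circ> r) \<longlonglongrightarrow> l"
      using r(1) Cauchy_convergent_iff convergent_def by blast
  qed
qed

section \<open>Eigenvectors of a compact self-adjoint operator are total\<close>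

text \<open>The zero vector counts as an eigenvector here; this is harmless for totality.\<close>
definition eigenvectors :: "('a::complex_vector \<Rightarrow> 'a) \<Rightarrow> 'a set" where
  "eigenvectors T = {e. \<exists>l. T e = l *\<^sub>C e}"

definition orth_compl :: "'a::complex_inner set \<Rightarrow> 'a set" where
  "orth_compl S = {u. \<forall>e\<in>S. cinner e u = 0}"

lemma orth_compl_add: "u \<in> orth_compl S \<Longrightarrow> w \<in> orth_compl S \<Longrightarrow> u + w \<in> orth_compl S"
  by (simp add: orth_compl_def cinner_add_right)

lemma orth_compl_scaleR: "u \<in> orth_compl S \<Longrightarrow> r *\<^sub>R u \<in> orth_compl S"
  by (simp add: orth_compl_def cinner_scaleR_right)

lemma orth_compl_disjoint: "e \<in> S \<Longrightarrow> e \<in> orth_compl S \<Longrightarrow> e = 0"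
  unfolding orth_compl_def using cinner_eq_zero_iff by blast

lemma closed_orth_compl: "closed (orth_compl S)"
proof -
  have "orth_compl S = (\<Inter>e\<in>S. {u. cinner e u = 0})"
    by (auto simp: orth_compl_def)
  moreover have "closed {u. cinner e u = 0}" for e
  proof (rule closed_Collect_eq)
    have "bounded_linear (\<lambda>u. cinner e u)"
    proof (rule bounded_linear_intro[where K = "norm e"])
      show "cmod (cinner e u) \<le> norm u * norm e" for u
        using cinner_Cauchy_Schwarz[of e u] by (simp add: mult.commute)
    qed (simp_all add: cinner_add_right cinner_scaleR_right scaleR_conv_of_real)
    then show "continuous_on UNIV (\<lambda>u. cinner e u)"
      by (rule linear_continuous_on)
  qed simp
  ultimately show ?thesis by auto
qed

lemma orth_compl_eigenvectors_invariant:
  assumes sa: "\<And>a b. cinner (x a) b = cinner a (x b)"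
    and "u \<in> orth_compl (eigenvectors x)"
  shows "x u \<in> orth_compl (eigenvectors x)"
proof -
  have "cinner e (x u) = 0" if "e \<in> eigenvectors x" for e
  proof -
    from that obtain l where "x e = l *\<^sub>C e"
      by (auto simp: eigenvectors_def)
    then have "cinner e (x u) = cnj l * cinner e u"
      by (simp add: sa[symmetric] cinner_scaleC_left)
    then show ?thesis
      using assms(2) that by (simp add: orth_compl_def)
  qed
  then show ?thesis
    by (simp add: orth_compl_def)
qed

lemma selfadjoint_approx_eigen_estimate:
  assumes sa: "\<And>a b. cinner (x a) b = cinner a (x b)"
    and bound: "norm (x (x u)) \<le> m * norm (x u)" and "norm u \<le> 1" "0 \<le> m"
  shows "(norm (x (x u) - m\<^sup>2 *\<^sub>R u))\<^sup>2 \<le> m\<^sup>2 * (m\<^sup>2 - (norm (x u))\<^sup>2)"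
proof -
  have "Re (cinner (x (x u)) (m\<^sup>2 *\<^sub>R u)) = m\<^sup>2 * (norm (x u))\<^sup>2"
    by (simp add: sa cinner_scaleR_right cinner_self_eq_norm_square)
  moreover have "(norm (m\<^sup>2 *\<^sub>R u))\<^sup>2 \<le> (m\<^sup>2)\<^sup>2"
    using \<open>norm u \<le> 1\<close> by (intro power_mono) (simp_all add: mult_left_le)
  moreover have "(norm (x (x u)))\<^sup>2 \<le> (m * norm (x u))\<^sup>2"
    using bound by (intro power_mono) simp_all
  ultimately show ?thesis
    unfolding norm_diff_square_cinner by (simp add: algebra_simps power2_eq_square)
qed

lemma Kop_square_eigen_limit:
  assumes x: "x \<in> Kop" and v: "\<And>n. norm (v n) \<le> 1" and "c \<noteq> 0"
    and approx: "(\<lambda>n. x (x (v n)) - c *\<^sub>R v n) \<longlonglongrightarrow> 0"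
  obtains r u where "strict_mono r" "(v \<circ> r) \<longlonglongrightarrow> u" "x (x u) = c *\<^sub>R u"
proof -
  have x_bl: "bounded_linear x"
    by (rule Kop_bounded_linear[OF x])
  have "\<forall>n. x (v n) \<in> closure (x ` cball 0 1)"
    using v by (auto intro: closure_subset[THEN subsetD])
  then obtain w r where r: "strict_mono r" "((\<lambda>n. x (v n)) \<circ> r) \<longlonglongrightarrow> w"
    by (rule seq_compactE[OF compact_imp_seq_compact[OF KopD(3)[OF x]]]) blast
  define d where "d n = x (x (v n)) - c *\<^sub>R v n" for n
  have d: "(d \<circ> r) \<longlonglongrightarrow> 0"
    using LIMSEQ_subseq_LIMSEQ[OF approx r(1)] by (simp add: d_def o_def)
  have xxv: "(\<lambda>n. x (x (v (r n)))) \<longlonglongrightarrow> x w"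
    using bounded_linear.tendsto[OF x_bl r(2)] by (simp add: o_def)
  have "(\<lambda>n. (1 / c) *\<^sub>R (x (x (v (r n))) - d (r n))) \<longlonglongrightarrow> (1 / c) *\<^sub>R (x w - 0)"
    using d by (intro tendsto_intros xxv) (simp add: o_def)
  then have vr: "(v \<circ> r) \<longlonglongrightarrow> (1 / c) *\<^sub>R x w"
    using \<open>c \<noteq> 0\<close> by (simp add: d_def o_def)
  have "(\<lambda>n. c *\<^sub>R v (r n) + d (r n)) \<longlonglongrightarrow> c *\<^sub>R ((1 / c) *\<^sub>R x w) + 0"
    using vr d by (intro tendsto_intros) (simp_all add: o_def)
  moreover have "(\<lambda>n. x (x (v (r n)))) \<longlonglongrightarrow> x (x ((1 / c) *\<^sub>R x w))"
    using vr by (intro bounded_linear.tendsto[OF x_bl]) (simp add: o_def)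
  ultimately have "x (x ((1 / c) *\<^sub>R x w)) = c *\<^sub>R ((1 / c) *\<^sub>R x w)"
    by (simp add: d_def LIMSEQ_unique)
  then show ?thesis
    using that r(1) vr by blast
qed

lemma selfadjoint_Kop_norming_sequence:
  assumes x: "x \<in> Kop" and sa: "\<And>a b. cinner (x a) b = cinner a (x b)"
    and M: "closed M" "\<And>u. u \<in> M \<Longrightarrow> x u \<in> M"
    and bound: "\<And>u. u \<in> M \<Longrightarrow> norm (x u) \<le> m * norm u" and "m > 0"
    and v: "\<And>n. v n \<in> M" "\<And>n. norm (v n) \<le> 1" "(\<lambda>n. norm (x (v n))) \<longlonglongrightarrow> m"
  obtains u where "u \<in> M" "u \<noteq> 0" "x (x u) = m\<^sup>2 *\<^sub>R u"
proof -
  define d where "d n = x (x (v n)) - m\<^sup>2 *\<^sub>R v n" for n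
  have "(\<lambda>n. (norm (d n))\<^sup>2) \<longlonglongrightarrow> 0"
  proof (rule Lim_null_comparison)
    show "\<forall>\<^sub>F n in sequentially. norm ((norm (d n))\<^sup>2) \<le> m\<^sup>2 * (m\<^sup>2 - (norm (x (v n)))\<^sup>2)"
      using selfadjoint_approx_eigen_estimate[OF sa bound[OF M(2)[OF v(1)]] v(2)] \<open>m > 0\<close>
      by (simp add: d_def)
    have "(\<lambda>n. m\<^sup>2 * (m\<^sup>2 - (norm (x (v n)))\<^sup>2)) \<longlonglongrightarrow> m\<^sup>2 * (m\<^sup>2 - m\<^sup>2)"
      by (intro tendsto_intros v(3))
    then show "(\<lambda>n. m\<^sup>2 * (m\<^sup>2 - (norm (x (v n)))\<^sup>2)) \<longlonglongrightarrow> 0"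
      by simp
  qed
  then have "(\<lambda>n. x (x (v n)) - m\<^sup>2 *\<^sub>R v n) \<longlonglongrightarrow> 0"
    by (simp add: d_def tendsto_norm_zero_iff)
  moreover have "m\<^sup>2 \<noteq> 0"
    using \<open>m > 0\<close> by simp
  ultimately obtain r u where r: "strict_mono r" "(v \<circ> r) \<longlonglongrightarrow> u" and u: "x (x u) = m\<^sup>2 *\<^sub>R u"
    using Kop_square_eigen_limit[of x v "m\<^sup>2"] x v(2) by blast
  have "u \<in> M"
    using closed_sequentially[OF M(1), of "v \<circ> r"] v(1) r(2) by simp
  have "(\<lambda>n. norm (x (v (r n)))) \<longlonglongrightarrow> norm (x u)"
    using r(2) by (intro tendsto_norm bounded_linear.tendsto[OF Kop_bounded_linear[OF x]]) (simp add: o_def)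
  moreover have "(\<lambda>n. norm (x (v (r n)))) \<longlonglongrightarrow> m"
    using LIMSEQ_subseq_LIMSEQ[OF v(3) r(1)] by (simp add: o_def)
  ultimately have "norm (x u) = m"
    by (rule LIMSEQ_unique)
  then have "u \<noteq> 0"
    using \<open>m > 0\<close> Kop_zero[OF x] by auto
  with \<open>u \<in> M\<close> u that show ?thesis by blast
qed

lemma Kop_norming_sequence:
  assumes x: "x \<in> Kop" and M: "\<And>u r. u \<in> M \<Longrightarrow> r *\<^sub>R u \<in> M"
    and u0: "u0 \<in> M" "x u0 \<noteq> 0"
  obtains m v where "m > 0" "\<And>u. u \<in> M \<Longrightarrow> norm (x u) \<le> m * norm u"
    "\<And>n. v n \<in> M" "\<And>n. norm (v n) \<le> 1" "(\<lambda>n. norm (x (v n))) \<longlonglongrightarrow> m"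
proof -
  define S where "S = (\<lambda>u. norm (x u)) ` (M \<inter> cball 0 1)"
  define m where "m = Sup S"
  have unit: "(1 / norm u) *\<^sub>R u \<in> M \<inter> cball 0 1" if "u \<in> M" for u
    using M[OF that] by (cases "u = 0") simp_all
  have "S \<noteq> {}"
    using unit[OF u0(1)] by (auto simp: S_def)
  have "bdd_above S"
  proof (rule bdd_aboveI)
    fix y assume "y \<in> S"
    then obtain u where "norm u \<le> 1" "y = norm (x u)"
      by (auto simp: S_def)
    moreover have "onorm x * norm u \<le> onorm x"
      using \<open>norm u \<le> 1\<close> onorm_pos_le[OF Kop_bounded_linear[OF x]] by (simp add: mult_left_le)
    ultimately show "y \<le> onorm x"
      using norm_Kop_le_onorm[OF x, of u] by simp
  qed
  have S_le: "norm (x u) \<le> m" if "u \<in> M \<inter> cball 0 1" for u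
    unfolding m_def using that \<open>bdd_above S\<close> by (intro cSup_upper) (auto simp: S_def)
  have bound: "norm (x u) \<le> m * norm u" if "u \<in> M" for u
  proof (cases "u = 0")
    case False
    then show ?thesis
      using S_le[OF unit[OF that]] by (simp add: Kop_scaleR[OF x] field_simps)
  qed (simp add: Kop_zero[OF x])
  have "u0 \<noteq> 0"
    using u0(2) Kop_zero[OF x] by auto
  then have "0 < norm (x u0) / norm u0"
    using u0(2) by simp
  then have "m > 0"
    using S_le[OF unit[OF u0(1)]] by (simp add: Kop_scaleR[OF x])
  have "m \<in> closure S"
    unfolding m_def by (rule closure_contains_Sup[OF \<open>S \<noteq> {}\<close> \<open>bdd_above S\<close>])
  then obtain s where s: "\<And>n. s n \<in> S" "s \<longlonglongrightarrow> m"
    unfolding closure_sequential by blast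
  then have "\<forall>n. \<exists>w. w \<in> M \<inter> cball 0 1 \<and> s n = norm (x w)"
    unfolding S_def by blast
  then obtain v where "\<And>n. v n \<in> M \<inter> cball 0 1" and "s = (\<lambda>n. norm (x (v n)))"
    using choice[of "\<lambda>n w. w \<in> M \<inter> cball 0 1 \<and> s n = norm (x w)"] by (auto simp: fun_eq_iff)
  then have v: "\<And>n. v n \<in> M" "\<And>n. norm (v n) \<le> 1" "(\<lambda>n. norm (x (v n))) \<longlonglongrightarrow> m"
    using s(2) by auto
  with \<open>m > 0\<close> bound show ?thesis
    using that by blast
qed

lemma selfadjoint_Kop_has_eigenvector:
  assumes x: "x \<in> Kop" and sa: "\<And>a b. cinner (x a) b = cinner a (x b)"
    and M: "closed M" "\<And>u. u \<in> M \<Longrightarrow> x u \<in> M" "\<And>u r. u \<in> M \<Longrightarrow> r *\<^sub>R u \<in> M"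
      "\<And>u w. u \<in> M \<Longrightarrow> w \<in> M \<Longrightarrow> u + w \<in> M"
    and u0: "u0 \<in> M" "x u0 \<noteq> 0"
  obtains e where "e \<in> M" "e \<noteq> 0" "e \<in> eigenvectors x"
proof -
  obtain m v where m: "m > 0" "\<And>u. u \<in> M \<Longrightarrow> norm (x u) \<le> m * norm u"
    and v: "\<And>n. v n \<in> M" "\<And>n. norm (v n) \<le> 1" "(\<lambda>n. norm (x (v n))) \<longlonglongrightarrow> m"
    using Kop_norming_sequence[OF x M(3) u0] by blast
  obtain u where u: "u \<in> M" "u \<noteq> 0" "x (x u) = m\<^sup>2 *\<^sub>R u"
    by (rule selfadjoint_Kop_norming_sequence[OF x sa M(1,2) m(2,1) v]) blast+
  text \<open>Now \<open>(x - m)(x + m) u = 0\<close>: either \<open>(x + m) u\<close> is an eigenvector for \<open>m\<close>, or \<open>u\<close> is one for \<open>-m\<close>.\<close>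
  define e where "e = x u + m *\<^sub>R u"
  have "x e = complex_of_real m *\<^sub>C e"
    using u(3) by (simp add: e_def KopD(1)[OF x] Kop_scaleR[OF x] scaleR_scaleC[symmetric]
        power2_eq_square scaleR_add_right)
  moreover have "x u = complex_of_real (- m) *\<^sub>C u" if "e = 0"
  proof -
    have "x u = (- m) *\<^sub>R u"
      using that by (simp add: e_def eq_neg_iff_add_eq_0)
    then show ?thesis
      by (simp only: scaleR_scaleC)
  qed
  moreover have "e \<in> M"
    unfolding e_def using u(1) M by blast
  ultimately show ?thesis
    using that u(1,2) unfolding eigenvectors_def by blast
qed

lemma eigenvectors_total:
  fixes x :: "'a::chilbert_space \<Rightarrow> 'a"
  assumes x: "x \<in> Kop" "adj x = x" and v: "v \<in> orth_compl (eigenvectors x)"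
  shows "v = 0"
proof (rule ccontr)
  assume "v \<noteq> 0"
  define M where "M = orth_compl (eigenvectors x)"
  have sa: "cinner (x a) b = cinner a (x b)" for a b
    using cinner_adj_right[OF x(1)] x(2) by simp
  have only_zero: "e = 0" if "e \<in> M" "e \<in> eigenvectors x" for e
    using orth_compl_disjoint that by (simp add: M_def)
  show False
  proof (cases "\<forall>u\<in>M. x u = 0")
    case True
    then have "v \<in> eigenvectors x"
      using v by (auto simp: M_def eigenvectors_def intro: exI[of _ 0])
    then show False
      using only_zero v \<open>v \<noteq> 0\<close> by (simp add: M_def)
  next
    case False
    then obtain u0 where "u0 \<in> M" "x u0 \<noteq> 0" by blast
    then obtain e where "e \<in> M" "e \<noteq> 0" "e \<in> eigenvectors x"
      using selfadjoint_Kop_has_eigenvector[OF x(1) sa closed_orth_compl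
          orth_compl_eigenvectors_invariant[OF sa] orth_compl_scaleR orth_compl_add]
      unfolding M_def by blast
    then show False
      using only_zero by blast
  qed
qed

section \<open>The \<open>C\<^sup>*\<close>-algebra generated by a compact self-adjoint operator\<close>

lemma gen_cstar_minimal:
  assumes "B \<subseteq> Kop" "x \<in> B"
    "\<forall>a\<in>B. \<forall>b\<in>B. opadd a b \<in> B"
    "\<forall>c. \<forall>a\<in>B. opscale c a \<in> B"
    "\<forall>a\<in>B. \<forall>b\<in>B. a \<circ> b \<in> B"
    "\<forall>a\<in>B. adj a \<in> B"
    "\<forall>f S. (\<forall>n. f n \<in> B) \<and> S \<in> Kop \<and> (\<lambda>n. onorm (\<lambda>v. f n v - S v)) \<longlonglongrightarrow> 0 \<longrightarrow> S \<in> B"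
  shows "gen_cstar x \<subseteq> B"
  unfolding gen_cstar_def by (rule Inter_lower) (use assms in blast)

lemma closed_line: "closed (range (\<lambda>\<mu>. \<mu> *\<^sub>C (e::'a::complex_normed_vector)))"
proof (cases "e = 0")
  case False
  have "complete (range (\<lambda>\<mu>. \<mu> *\<^sub>C e))"
    by (rule complete_isometric_image[where e = "norm e", OF _ subspace_UNIV
          bounded_linear_scaleC_left _ complete_UNIV])
      (simp_all add: False norm_scaleC)
  then show ?thesis
    by (rule complete_imp_closed)
qed simp

lemma eigenvectors_opadd:
  assumes "e \<in> eigenvectors a" "e \<in> eigenvectors b"
  shows "e \<in> eigenvectors (opadd a b)"
proof -
  obtain \<alpha> \<beta> where "a e = \<alpha> *\<^sub>C e" "b e = \<beta> *\<^sub>C e"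
    using assms unfolding eigenvectors_def by blast
  then have "opadd a b e = (\<alpha> + \<beta>) *\<^sub>C e"
    by (simp add: opadd_def scaleC_add_left)
  then show ?thesis
    unfolding eigenvectors_def by blast
qed

lemma eigenvectors_opscale:
  assumes "e \<in> eigenvectors a"
  shows "e \<in> eigenvectors (opscale c a)"
proof -
  obtain \<alpha> where "a e = \<alpha> *\<^sub>C e"
    using assms unfolding eigenvectors_def by blast
  then have "opscale c a e = (c * \<alpha>) *\<^sub>C e"
    by (simp add: opscale_def scaleC_scaleC)
  then show ?thesis
    unfolding eigenvectors_def by blast
qed

lemma eigenvectors_comp:
  assumes "a \<in> Kop" "e \<in> eigenvectors a" "e \<in> eigenvectors b"
  shows "e \<in> eigenvectors (a \<circ> b)"
proof -
  obtain \<alpha> \<beta> where "a e = \<alpha> *\<^sub>C e" "b e = \<beta> *\<^sub>C e"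
    using assms unfolding eigenvectors_def by blast
  then have "(a \<circ> b) e = (\<beta> * \<alpha>) *\<^sub>C e"
    by (simp add: KopD(2)[OF assms(1)] scaleC_scaleC)
  then show ?thesis
    unfolding eigenvectors_def by blast
qed

lemma eigenvectors_tendsto:
  fixes f :: "nat \<Rightarrow> 'a::complex_normed_vector \<Rightarrow> 'a"
  assumes "\<And>n. e \<in> eigenvectors (f n)" "(\<lambda>n. f n e) \<longlonglongrightarrow> S e"
  shows "e \<in> eigenvectors S"
proof -
  have "f n e \<in> range (\<lambda>\<mu>. \<mu> *\<^sub>C e)" for n
    using assms(1)[of n] unfolding eigenvectors_def by blast
  then have "S e \<in> range (\<lambda>\<mu>. \<mu> *\<^sub>C e)"
    using closed_sequentially[OF closed_line, of "\<lambda>n. f n e"] assms(2) by blast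
  then show ?thesis
    unfolding eigenvectors_def by blast
qed

lemma onorm_tendsto_imp_tendsto_apply:
  fixes f :: "nat \<Rightarrow> 'a::chilbert_space \<Rightarrow> 'a"
  assumes f: "\<And>n. f n \<in> Kop" and S: "S \<in> Kop"
    and lim: "(\<lambda>n. onorm (\<lambda>v. f n v - S v)) \<longlonglongrightarrow> 0"
  shows "(\<lambda>n. f n e) \<longlonglongrightarrow> S e" "(\<lambda>n. adj (f n) e) \<longlonglongrightarrow> adj S e"
proof -
  have bound: "(\<lambda>n. onorm (\<lambda>v. f n v - S v) * norm e) \<longlonglongrightarrow> 0"
    using tendsto_mult_left_zero[OF lim] by simp
  have diff: "(\<lambda>v. f n v - S v) \<in> Kop" for n
    by (rule Kop_minus[OF f S])
  have "(\<lambda>n. f n e - S e) \<longlonglongrightarrow> 0"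
    using norm_Kop_le_onorm[OF diff] by (intro Lim_null_comparison[OF _ bound] always_eventually) simp
  then show "(\<lambda>n. f n e) \<longlonglongrightarrow> S e"
    by (simp add: LIM_zero_iff)
  have "(\<lambda>n. adj (f n) e - adj S e) \<longlonglongrightarrow> 0"
    using norm_adj_le[OF diff] adj_minus[OF f S]
    by (intro Lim_null_comparison[OF _ bound] always_eventually) simp
  then show "(\<lambda>n. adj (f n) e) \<longlonglongrightarrow> adj S e"
    by (simp add: LIM_zero_iff)
qed

lemma gen_cstar_eigenvectors:
  fixes x :: "'a::chilbert_space \<Rightarrow> 'a"
  assumes x: "x \<in> Kop" "adj x = x"
  shows "gen_cstar x \<subseteq> {c \<in> Kop. eigenvectors x \<subseteq> eigenvectors c \<inter> eigenvectors (adj c)}"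
    (is "_ \<subseteq> ?B")
proof (rule gen_cstar_minimal)
  show "?B \<subseteq> Kop"
    by blast
  show "x \<in> ?B"
    using x by simp
  show "\<forall>a\<in>?B. \<forall>b\<in>?B. opadd a b \<in> ?B"
  proof (intro ballI)
    fix a b assume a: "a \<in> ?B" and b: "b \<in> ?B"
    then have "eigenvectors x \<subseteq> eigenvectors (opadd a b) \<inter> eigenvectors (opadd (adj a) (adj b))"
      using eigenvectors_opadd by blast
    then show "opadd a b \<in> ?B"
      using a b by (simp add: Kop_opadd adj_opadd)
  qed
  show "\<forall>c. \<forall>a\<in>?B. opscale c a \<in> ?B"
  proof (intro allI ballI)
    fix c a assume a: "a \<in> ?B"
    then have "eigenvectors x \<subseteq> eigenvectors (opscale c a) \<inter> eigenvectors (opscale (cnj c) (adj a))"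
      using eigenvectors_opscale by blast
    then show "opscale c a \<in> ?B"
      using a by (simp add: Kop_opscale adj_opscale)
  qed
  show "\<forall>a\<in>?B. \<forall>b\<in>?B. a \<circ> b \<in> ?B"
  proof (intro ballI)
    fix a b assume a: "a \<in> ?B" and b: "b \<in> ?B"
    then have "eigenvectors x \<subseteq> eigenvectors (a \<circ> b) \<inter> eigenvectors (adj b \<circ> adj a)"
      using eigenvectors_comp adj_Kop by blast
    then show "a \<circ> b \<in> ?B"
      using a b by (simp add: Kop_comp adj_comp)
  qed
  show "\<forall>a\<in>?B. adj a \<in> ?B"
    by (simp add: adj_Kop adj_adj Int_commute)
  show "\<forall>f S. (\<forall>n. f n \<in> ?B) \<and> S \<in> Kop \<and> (\<lambda>n. onorm (\<lambda>v. f n v - S v)) \<longlonglongrightarrow> 0 \<longrightarrow> S \<in> ?B"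
  proof (intro allI impI)
    fix f S assume "(\<forall>n. f n \<in> ?B) \<and> S \<in> Kop \<and> (\<lambda>n. onorm (\<lambda>v. f n v - S v)) \<longlonglongrightarrow> 0"
    then have f: "\<And>n. f n \<in> Kop" "\<And>n. eigenvectors x \<subseteq> eigenvectors (f n) \<inter> eigenvectors (adj (f n))"
      and S: "S \<in> Kop" and lim: "(\<lambda>n. onorm (\<lambda>v. f n v - S v)) \<longlonglongrightarrow> 0"
      by auto
    have "e \<in> eigenvectors S \<inter> eigenvectors (adj S)" if "e \<in> eigenvectors x" for e
      using f(2) that onorm_tendsto_imp_tendsto_apply[OF f(1) S lim]
        eigenvectors_tendsto[of e f S] eigenvectors_tendsto[of e "\<lambda>n. adj (f n)" "adj S"]
      by blast
    then show "S \<in> ?B"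
      using S by blast
  qed
qed

section \<open>Operators determined by matrix coefficients\<close>

lemma op_eqI_cinner:
  assumes "\<And>u v. cinner u (S v) = cinner u (T v)"
  shows "S = T"
  using assms cinner_extensionality by blast

lemma Kop_eq_if_quadratic_forms_eq:
  assumes S: "S \<in> Kop" and T: "T \<in> Kop" and eq: "\<And>v. cinner v (S v) = cinner v (T v)"
  shows "S = T"
proof (rule op_eqI_cinner)
  fix u v
  define R where "R = (\<lambda>v. S v - T v)"
  have R: "R \<in> Kop"
    unfolding R_def by (rule Kop_minus[OF S T])
  have q: "cinner v (R v) = 0" for v
    using eq[of v] by (simp add: R_def cinner_diff_right)
  text \<open>Polarization, with the test vectors \<open>u + v\<close> and \<open>u + i v\<close>.\<close>
  have "cinner u (R v) + cinner v (R u) = 0"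
    using q[of "u + v"] q[of u] q[of v]
    by (simp add: KopD(1)[OF R] cinner_add_left cinner_add_right add_ac)
  moreover have "cinner u (R (\<i> *\<^sub>C v)) + cinner (\<i> *\<^sub>C v) (R u) = 0"
    using q[of "u + \<i> *\<^sub>C v"] q[of u] q[of "\<i> *\<^sub>C v"]
    by (simp add: KopD(1)[OF R] cinner_add_left cinner_add_right add_ac)
  then have "cinner u (R v) - cinner v (R u) = 0"
    by (simp add: KopD(2)[OF R] cinner_scaleC_left cinner_scaleC_right right_diff_distrib[symmetric])
  ultimately have "cinner u (R v) = 0"
    by (simp add: algebra_simps)
  then show "cinner u (S v) = cinner u (T v)"
    by (simp add: R_def cinner_diff_right)
qed

lemma Kop_eq_if_eigen_coeffs_eq:
  fixes x S T :: "'a::chilbert_space \<Rightarrow> 'a"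
  assumes x: "x \<in> Kop" "adj x = x" and S: "S \<in> Kop" and T: "T \<in> Kop"
    and eq: "\<And>\<xi> \<eta>. \<xi> \<in> eigenvectors x \<Longrightarrow> \<eta> \<in> eigenvectors x \<Longrightarrow>
      cinner \<xi> (S \<eta>) = cinner \<xi> (T \<eta>)"
  shows "S = T"
proof
  define R where "R = (\<lambda>v. S v - T v)"
  have R: "R \<in> Kop"
    unfolding R_def by (rule Kop_minus[OF S T])
  have R_eigen: "cinner \<xi> (R \<eta>) = 0" if "\<xi> \<in> eigenvectors x" "\<eta> \<in> eigenvectors x" for \<xi> \<eta>
    using eq[OF that] by (simp add: R_def cinner_diff_right)
  have "adj R \<xi> = 0" if "\<xi> \<in> eigenvectors x" for \<xi>
  proof (rule eigenvectors_total[OF x])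
    have "cinner \<eta> (adj R \<xi>) = cnj (cinner \<xi> (R \<eta>))" for \<eta>
      using cinner_adj_right[OF R, of \<eta> \<xi>] cinner_commute[of "R \<eta>" \<xi>] by simp
    then show "adj R \<xi> \<in> orth_compl (eigenvectors x)"
      using R_eigen[OF that] by (simp add: orth_compl_def)
  qed
  then have "R w = 0" for w
    by (intro eigenvectors_total[OF x]) (simp add: orth_compl_def cinner_adj_left[OF R, symmetric])
  then show "S w = T w" for w
    by (simp add: R_def)
qed

section \<open>Weak-2-local \<open>*\<close>-derivations\<close>

definition vector_functional :: "'a::complex_inner \<Rightarrow> 'a \<Rightarrow> ('a \<Rightarrow> 'a) \<Rightarrow> complex" where
  "vector_functional u w S = cinner u (S w)"

lemma dual_K_vector_functional: "dual_K (vector_functional u w)"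
  unfolding dual_K_def
proof (intro conjI ballI allI)
  show "vector_functional u w (opadd a b) = vector_functional u w a + vector_functional u w b" for a b
    by (simp add: vector_functional_def opadd_def cinner_add_right)
  show "vector_functional u w (opscale c a) = c * vector_functional u w a" for c a
    by (simp add: vector_functional_def opscale_def cinner_scaleC_right)
  have "cmod (vector_functional u w a) \<le> (norm u * norm w) * onorm a" if "a \<in> Kop" for a
  proof -
    have "cmod (vector_functional u w a) \<le> norm u * norm (a w)"
      unfolding vector_functional_def by (rule cinner_Cauchy_Schwarz)
    also have "\<dots> \<le> norm u * (onorm a * norm w)"
      by (intro mult_left_mono norm_Kop_le_onorm[OF that]) simp_all
    finally show ?thesis
      by (simp add: mult_ac)
  qed
  then show "\<exists>C. \<forall>a\<in>Kop. cmod (vector_functional u w a) \<le> C * onorm a"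
    by blast
qed

lemma weak_2_local_star_derivationE:
  assumes "weak_2_local_star_derivation \<Delta>" "a \<in> Kop" "b \<in> Kop"
  obtains D where "star_derivation D"
    "cinner u (\<Delta> a w) = cinner u (D a w)" "cinner u (\<Delta> b w) = cinner u (D b w)"
  using assms dual_K_vector_functional[of u w]
  unfolding weak_2_local_star_derivation_def vector_functional_def by blast

lemma weak_2_local_Kop: "weak_2_local_star_derivation \<Delta> \<Longrightarrow> a \<in> Kop \<Longrightarrow> \<Delta> a \<in> Kop"
  unfolding weak_2_local_star_derivation_def by blast

lemma star_derivationD:
  assumes "star_derivation D" "a \<in> Kop" "b \<in> Kop"
  shows "D a \<in> Kop" "D (opadd a b) = opadd (D a) (D b)" "D (opscale c a) = opscale c (D a)"
    "D (a \<circ> b) = opadd (D a \<circ> b) (a \<circ> D b)" "D (adj a) = adj (D a)"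
  using assms unfolding star_derivation_def by blast+

lemma star_derivation_self_adjoint_diagonal_real:
  fixes b :: "'a::chilbert_space \<Rightarrow> 'a"
  assumes D: "star_derivation D" and b: "b \<in> Kop" "adj b = b"
  shows "Im (cinner v (D b v)) = 0"
proof -
  have Db: "D b \<in> Kop" "adj (D b) = D b"
    using star_derivationD[OF D b(1) b(1)] b(2) by auto
  have "cinner v (D b v) = cnj (cinner v (D b v))"
    using cinner_adj_left[OF Db(1), of v v] cinner_commute[of v "D b v"] Db(2) by simp
  then show ?thesis
    using Reals_cnj_iff complex_is_Real_iff by metis
qed

lemma star_derivation_eigen_coeff:
  fixes c :: "'a::chilbert_space \<Rightarrow> 'a"
  assumes D: "star_derivation D" and c: "c \<in> Kop"
    and c_eigen: "c \<eta> = \<alpha> *\<^sub>C \<eta>" and adj_eigen: "adj c \<xi> = \<nu> *\<^sub>C \<xi>"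
  shows "cinner \<eta> \<eta> * cinner \<xi> (D c \<eta>) = (\<alpha> - cnj \<nu>) * cinner \<xi> (D (rank_one \<eta>) \<eta>)"
proof -
  define p where "p = rank_one \<eta>"
  have p: "p \<in> Kop"
    unfolding p_def by (rule rank_one_Kop)
  have "c \<circ> p = opscale \<alpha> p"
    by (simp add: fun_eq_iff p_def rank_one_def opscale_def KopD(2)[OF c] c_eigen
        scaleC_scaleC mult.commute)
  then have "opscale \<alpha> (D p) = opadd (D c \<circ> p) (c \<circ> D p)"
    using star_derivationD(3,4)[OF D p c] star_derivationD(4)[OF D c p] by simp
  then have "opscale \<alpha> (D p) \<eta> = opadd (D c \<circ> p) (c \<circ> D p) \<eta>"
    by (rule fun_cong)
  then have Leibniz: "\<alpha> *\<^sub>C D p \<eta> = D c (p \<eta>) + c (D p \<eta>)"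
    by (simp add: opadd_def opscale_def)
  have Dc_p: "D c (p \<eta>) = cinner \<eta> \<eta> *\<^sub>C D c \<eta>"
    using KopD(2)[OF star_derivationD(1)[OF D c c]] by (simp add: p_def rank_one_def)
  have c_Dp: "cinner \<xi> (c (D p \<eta>)) = cnj \<nu> * cinner \<xi> (D p \<eta>)"
    using cinner_adj_left[OF c, of \<xi> "D p \<eta>"] adj_eigen by (simp add: cinner_scaleC_left)
  have "\<alpha> * cinner \<xi> (D p \<eta>) = cinner \<xi> (\<alpha> *\<^sub>C D p \<eta>)"
    by (simp add: cinner_scaleC_right)
  also have "\<dots> = cinner \<xi> (D c (p \<eta>)) + cinner \<xi> (c (D p \<eta>))"
    unfolding Leibniz by (rule cinner_add_right)
  also have "\<dots> = cinner \<eta> \<eta> * cinner \<xi> (D c \<eta>) + cnj \<nu> * cinner \<xi> (D p \<eta>)"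
    by (simp add: Dc_p c_Dp cinner_scaleC_right)
  finally show ?thesis
    by (simp add: p_def algebra_simps)
qed

lemma weak_2_local_eigen_coeff:
  fixes c :: "'a::chilbert_space \<Rightarrow> 'a"
  assumes \<Delta>: "weak_2_local_star_derivation \<Delta>" and c: "c \<in> Kop"
    and "c \<eta> = \<alpha> *\<^sub>C \<eta>" "adj c \<xi> = \<nu> *\<^sub>C \<xi>"
  shows "cinner \<eta> \<eta> * cinner \<xi> (\<Delta> c \<eta>) = (\<alpha> - cnj \<nu>) * cinner \<xi> (\<Delta> (rank_one \<eta>) \<eta>)"
proof -
  obtain D where "star_derivation D" "cinner \<xi> (\<Delta> c \<eta>) = cinner \<xi> (D c \<eta>)"
      "cinner \<xi> (\<Delta> (rank_one \<eta>) \<eta>) = cinner \<xi> (D (rank_one \<eta>) \<eta>)"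
    using weak_2_local_star_derivationE[OF \<Delta> c rank_one_Kop] by blast
  then show ?thesis
    using star_derivation_eigen_coeff[OF _ c assms(3,4)] by simp
qed

lemma weak_2_local_homogeneous:
  assumes \<Delta>: "weak_2_local_star_derivation \<Delta>" and a: "a \<in> Kop"
  shows "\<Delta> (opscale c a) = opscale c (\<Delta> a)"
proof (rule op_eqI_cinner)
  fix u v
  obtain D where D: "star_derivation D" "cinner u (\<Delta> (opscale c a) v) = cinner u (D (opscale c a) v)"
      "cinner u (\<Delta> a v) = cinner u (D a v)"
    using weak_2_local_star_derivationE[OF \<Delta> Kop_opscale[OF a] a] by blast
  then show "cinner u (\<Delta> (opscale c a) v) = cinner u (opscale c (\<Delta> a) v)"
    using star_derivationD(3)[OF D(1) a a] by (simp add: opscale_def cinner_scaleC_right)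
qed

lemma weak_2_local_additive_on_gen_cstar:
  fixes x :: "'a::chilbert_space \<Rightarrow> 'a"
  assumes \<Delta>: "weak_2_local_star_derivation \<Delta>" and x: "x \<in> Kop" "adj x = x"
    and a: "a \<in> gen_cstar x" and b: "b \<in> gen_cstar x"
  shows "\<Delta> (opadd a b) = opadd (\<Delta> a) (\<Delta> b)"
proof -
  have aK: "a \<in> Kop" and a_diag: "eigenvectors x \<subseteq> eigenvectors a \<inter> eigenvectors (adj a)"
    using a gen_cstar_eigenvectors[OF x] by blast+
  have bK: "b \<in> Kop" and b_diag: "eigenvectors x \<subseteq> eigenvectors b \<inter> eigenvectors (adj b)"
    using b gen_cstar_eigenvectors[OF x] by blast+
  have cK: "opadd a b \<in> Kop"
    by (rule Kop_opadd[OF aK bK])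
  show ?thesis
  proof (rule Kop_eq_if_eigen_coeffs_eq[OF x])
    show "\<Delta> (opadd a b) \<in> Kop"
      by (rule weak_2_local_Kop[OF \<Delta> cK])
    show "opadd (\<Delta> a) (\<Delta> b) \<in> Kop"
      by (rule Kop_opadd[OF weak_2_local_Kop[OF \<Delta> aK] weak_2_local_Kop[OF \<Delta> bK]])
    fix \<xi> \<eta> assume \<xi>: "\<xi> \<in> eigenvectors x" and \<eta>: "\<eta> \<in> eigenvectors x"
    then have "\<eta> \<in> eigenvectors a" "\<eta> \<in> eigenvectors b"
      "\<xi> \<in> eigenvectors (adj a)" "\<xi> \<in> eigenvectors (adj b)"
      using a_diag b_diag by blast+
    then obtain \<alpha>1 \<alpha>2 \<nu>1 \<nu>2 where eigen:
      "a \<eta> = \<alpha>1 *\<^sub>C \<eta>" "b \<eta> = \<alpha>2 *\<^sub>C \<eta>" "adj a \<xi> = \<nu>1 *\<^sub>C \<xi>" "adj b \<xi> = \<nu>2 *\<^sub>C \<xi>"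
      unfolding eigenvectors_def by blast
    then have "opadd a b \<eta> = (\<alpha>1 + \<alpha>2) *\<^sub>C \<eta>" "adj (opadd a b) \<xi> = (\<nu>1 + \<nu>2) *\<^sub>C \<xi>"
      unfolding adj_opadd[OF aK bK] by (simp_all add: opadd_def scaleC_add_left)
    note coeff = weak_2_local_eigen_coeff[OF \<Delta> cK this]
      weak_2_local_eigen_coeff[OF \<Delta> aK eigen(1,3)] weak_2_local_eigen_coeff[OF \<Delta> bK eigen(2,4)]
    have "cinner \<eta> \<eta> * cinner \<xi> (\<Delta> (opadd a b) \<eta>) =
        cinner \<eta> \<eta> * cinner \<xi> (\<Delta> a \<eta>) + cinner \<eta> \<eta> * cinner \<xi> (\<Delta> b \<eta>)"
      unfolding coeff by (simp add: algebra_simps)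
    then show "cinner \<xi> (\<Delta> (opadd a b) \<eta>) = cinner \<xi> (opadd (\<Delta> a) (\<Delta> b) \<eta>)"
    proof (cases "\<eta> = 0")
      case True
      then show ?thesis
        using Kop_zero[OF weak_2_local_Kop[OF \<Delta> cK]] Kop_zero[OF weak_2_local_Kop[OF \<Delta> aK]]
          Kop_zero[OF weak_2_local_Kop[OF \<Delta> bK]]
        by (simp add: opadd_def)
    qed (simp add: cinner_eq_zero_iff opadd_def cinner_add_right flip: distrib_left)
  qed
qed

lemma weak_2_local_self_adjoint_decomposition:
  fixes a b :: "'a::chilbert_space \<Rightarrow> 'a"
  assumes \<Delta>: "weak_2_local_star_derivation \<Delta>" and a: "a \<in> Kop" "adj a = a"
    and b: "b \<in> Kop" "adj b = b"
  shows "\<Delta> (opadd a (opscale \<i> b)) = opadd (\<Delta> a) (opscale \<i> (\<Delta> b))"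
proof (rule Kop_eq_if_quadratic_forms_eq)
  define w where "w = opadd a (opscale \<i> b)"
  have ib: "opscale \<i> b \<in> Kop"
    by (rule Kop_opscale[OF b(1)])
  have w: "w \<in> Kop"
    unfolding w_def by (rule Kop_opadd[OF a(1) ib])
  show "\<Delta> (opadd a (opscale \<i> b)) \<in> Kop" "opadd (\<Delta> a) (opscale \<i> (\<Delta> b)) \<in> Kop"
    using weak_2_local_Kop[OF \<Delta>] w a(1) b(1) by (auto simp: w_def intro: Kop_opadd Kop_opscale)
  fix v
  have D_w: "cinner v (D w v) = cinner v (D a v) + \<i> * cinner v (D b v)" if "star_derivation D" for D
    using star_derivationD(2)[OF that a(1) ib] star_derivationD(3)[OF that b(1) b(1)]
    by (simp add: w_def opadd_def opscale_def cinner_add_right cinner_scaleC_right)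
  obtain D0 where D0: "star_derivation D0" "cinner v (\<Delta> a v) = cinner v (D0 a v)"
      "cinner v (\<Delta> b v) = cinner v (D0 b v)"
    using weak_2_local_star_derivationE[OF \<Delta> a(1) b(1)] by blast
  obtain D1 where D1: "star_derivation D1" "cinner v (\<Delta> w v) = cinner v (D1 w v)"
      "cinner v (\<Delta> a v) = cinner v (D1 a v)"
    using weak_2_local_star_derivationE[OF \<Delta> w a(1)] by blast
  obtain D2 where D2: "star_derivation D2" "cinner v (\<Delta> w v) = cinner v (D2 w v)"
      "cinner v (\<Delta> b v) = cinner v (D2 b v)"
    using weak_2_local_star_derivationE[OF \<Delta> w b(1)] by blast
  have real: "Im (cinner v (\<Delta> a v)) = 0" "Im (cinner v (\<Delta> b v)) = 0"
    "Im (cinner v (D1 b v)) = 0" "Im (cinner v (D2 a v)) = 0"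
    using star_derivation_self_adjoint_diagonal_real[OF D0(1) a]
      star_derivation_self_adjoint_diagonal_real[OF D0(1) b]
      star_derivation_self_adjoint_diagonal_real[OF D1(1) b]
      star_derivation_self_adjoint_diagonal_real[OF D2(1) a] D0(2,3)
    by simp_all
  have "cinner v (\<Delta> w v) = cinner v (\<Delta> a v) + \<i> * cinner v (D1 b v)"
    "cinner v (\<Delta> w v) = cinner v (D2 a v) + \<i> * cinner v (\<Delta> b v)"
    using D1 D2 D_w[OF D1(1)] D_w[OF D2(1)] by simp_all
  then have "cinner v (\<Delta> w v) = cinner v (\<Delta> a v) + \<i> * cinner v (\<Delta> b v)"
    using real by (simp add: complex_eq_iff)
  then show "cinner v (\<Delta> (opadd a (opscale \<i> b)) v) = cinner v (opadd (\<Delta> a) (opscale \<i> (\<Delta> b)) v)"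
    by (simp add: w_def opadd_def opscale_def cinner_add_right cinner_scaleC_right)
qed

theorem corollary3p8:
  fixes \<Delta> :: "('a::chilbert_space \<Rightarrow> 'a) \<Rightarrow> ('a \<Rightarrow> 'a)"
  assumes "weak_2_local_star_derivation \<Delta>"
  shows "quasi_linear \<Delta>"
  unfolding quasi_linear_def
proof (intro conjI ballI impI allI)
  fix x a b :: "'a \<Rightarrow> 'a" assume "x \<in> Kop" "adj x = x" "a \<in> gen_cstar x" "b \<in> gen_cstar x"
  then show "\<Delta> (opadd a b) = opadd (\<Delta> a) (\<Delta> b)"
    using weak_2_local_additive_on_gen_cstar[OF assms] by blast
next
  fix x a :: "'a \<Rightarrow> 'a" and c assume "x \<in> Kop" "adj x = x" "a \<in> gen_cstar x"
  then have "a \<in> Kop"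
    using gen_cstar_eigenvectors by blast
  then show "\<Delta> (opscale c a) = opscale c (\<Delta> a)"
    by (rule weak_2_local_homogeneous[OF assms])
next
  fix a b :: "'a \<Rightarrow> 'a" assume "a \<in> Kop" "b \<in> Kop" "adj a = a" "adj b = b"
  then show "\<Delta> (opadd a (opscale \<i> b)) = opadd (\<Delta> a) (opscale \<i> (\<Delta> b))"
    using weak_2_local_self_adjoint_decomposition[OF assms] by blast
qed

end
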